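(* Let $A, B$ be $2n\times 2n$ real symmetric positive semidefinite matrices whose kernels are symplectic subspaces of $\mathbb{R}^{2n}$. If $A$ lies in the convex hull of the symplectic orbit of $B$, i.e. $A = \sum_{i=1}^m \lambda_i M_i^T B M_i$ for some $m\ge 1$, some $M_1,\dots,M_m\in\operatorname{Sp}(2n)$, and some $\lambda_1,\dots,\lambda_m > 0$ with $\sum_i \lambda_i = 1$, then $d(A)\prec^w d(B)$.
   Context: Let $J = \begin{bmatrix} 0 & I_n \\ -I_n & 0\end{bmatrix}$. A real $2n\times 2n$ matrix $M$ is symplectic if $M^TJM = J$; $\operatorname{Sp}(2n)$ denotes the group of such matrices. A linear subspace $W\subseteq\mathbb{R}^{2n}$ is symplectic if for every $0\neq u\in W$ there is $v\in W$ with $u^TJv\neq 0$. For a real symmetric positive semidefinite $2n\times 2n$ matrix $A$ whose kernel is a symplectic subspace, there is $M\in\operatorname{Sp}(2n)$ with $M^TAM = D\oplus D$ where $D$ is an $n\times n$ diagonal matrix with non-negative entries, unique up to permutation of its diagonal entries; these are the symplectic eigenvalues of $A$, and $d(A) = (d_1(A),\dots,d_n(A))$ denotes them in non-decreasing order. For $x\in\mathbb{R}^n$, $x^\uparrow$ denotes $x$ rearranged in non-decreasing order. For $x,y\in\mathbb{R}^n$, $x\prec^w y$ ($x$ is weakly supermajorized by $y$) means $\sum_{j=1}^k x^\uparrow_j \ge \sum_{j=1}^k y^\uparrow_j$ for all $1\le k\le n$. *)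

theory Defs
  imports "HOL-Analysis.Analysis" "HOL-Library.Multiset"
begin

text \<open>We model R^{2n} as real ^ ('n + 'n): the first copy of 'n gives the
coordinates 1..n, the second copy gives n+1..2n.  2n x 2n matrices are
real ^ ('n + 'n) ^ ('n + 'n).\<close>

type_synonym 'n smat = "real ^ ('n + 'n) ^ ('n + 'n)"
type_synonym 'n svec = "real ^ ('n + 'n)"

definition Jmat :: "('n::finite) smat" where
  "Jmat = (\<chi> p q. case (p, q) of
              (Inl i, Inr j) \<Rightarrow> (if i = j then 1 else 0)
            | (Inr i, Inl j) \<Rightarrow> (if i = j then -1 else 0)
            | _ \<Rightarrow> 0)"

definition symplectic :: "('n::finite) smat \<Rightarrow> bool" where
  "symplectic M \<longleftrightarrow> transpose M ** Jmat ** M = Jmat"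

definition symplectic_subspace :: "('n::finite) svec set \<Rightarrow> bool" where
  "symplectic_subspace W \<longleftrightarrow> subspace W \<and>
     (\<forall>u\<in>W. u \<noteq> 0 \<longrightarrow> (\<exists>v\<in>W. u \<bullet> (Jmat *v v) \<noteq> 0))"

definition kernel :: "('n::finite) smat \<Rightarrow> 'n svec set" where
  "kernel A = {x. A *v x = 0}"

definition sym_psd :: "('n::finite) smat \<Rightarrow> bool" where
  "sym_psd A \<longleftrightarrow> transpose A = A \<and> (\<forall>x. 0 \<le> x \<bullet> (A *v x))"

definition diag_dsum :: "(('n::finite) \<Rightarrow> real) \<Rightarrow> 'n smat" where
  "diag_dsum d = (\<chi> p q. case (p, q) of
              (Inl i, Inl j) \<Rightarrow> (if i = j then d i else 0)
            | (Inr i, Inr j) \<Rightarrow> (if i = j then d i else 0)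
            | _ \<Rightarrow> 0)"

definition symp_eigs :: "('n::finite) smat \<Rightarrow> real list" where
  "symp_eigs A = (THE ds. sorted ds \<and>
      (\<exists>M d. symplectic M \<and> (\<forall>i. 0 \<le> d i) \<and>
             transpose M ** A ** M = diag_dsum d \<and>
             mset ds = image_mset d (mset_set (UNIV :: 'n set))))"

definition weak_supmaj :: "real list \<Rightarrow> real list \<Rightarrow> bool" where
  "weak_supmaj x y \<longleftrightarrow> length x = length y \<and>
     (\<forall>k. 1 \<le> k \<and> k \<le> length x \<longrightarrow>
        sum_list (take k (sort x)) \<ge> sum_list (take k (sort y)))"

end

theory Submission
  imports Defs
begin

text \<open>
  Williamson's normal form is built one block at a time: inside the symplectic complement of
  the pairs found so far, either the symplectic kernel of \<open>A\<close> supplies a pair with \<open>d = 0\<close>,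
  or \<open>A\<close> is definite there and a maximiser of \<open>q(J A x) / q(x)\<close>, \<open>q(x) = x\<^sup>T A x\<close>,
  spans a block \<open>A e = d J f\<close>, \<open>A f = -d J e\<close>.

  The core is a Ky Fan type principle: for every symplectically orthonormal family
  \<open>(u i, v i)\<close>, \<open>i \<in> S\<close>, the frame trace \<open>\<Sum>i\<in>S. u i\<^sup>T A u i + v i\<^sup>T A v i\<close> is at
  least twice the sum of the \<open>|S|\<close> smallest symplectic eigenvalues, with equality for columns
  of a Williamson diagonaliser.  In Williamson coordinates \<open>A = D \<oplus> D\<close> the frame trace is
  \<open>\<Sum>p. d p * w p\<close>, where the row weights of the frame satisfy
  \<open>\<Sum>p\<notin>R. w p \<ge> 2 (|S| - |R|)\<close> for every \<open>R\<close>, and Abel summation gives the bound.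
  The principle makes the symplectic spectrum unique.  Symplectic maps preserve such families,
  so for \<open>A = \<Sum>l. \<lambda> l *\<^sub>R (M l)\<^sup>T B M l\<close> the frame trace of \<open>A\<close> at an optimal family is
  a convex combination of frame traces of \<open>B\<close>, each bounded below by the sum for \<open>B\<close>.
\<close>

lemma sum_UNIV_Plus:
  "(\<Sum>x\<in>(UNIV::('a::finite + 'b::finite) set). g x) = (\<Sum>i\<in>UNIV. g (Inl i)) + (\<Sum>j\<in>UNIV. g (Inr j))"
  by (subst UNIV_Plus_UNIV[symmetric], subst sum.Plus) (auto simp: o_def)

lemma vec_eq_iff_Plus:
  "(x::'a^('m::finite + 'n::finite)) = y \<longleftrightarrow> (\<forall>i. x $ Inl i = y $ Inl i) \<and> (\<forall>j. x $ Inr j = y $ Inr j)"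
  by (metis sumE vec_eq_iff)

lemma inner_svec_expand:
  "(x::('n::finite) svec) \<bullet> y = (\<Sum>i\<in>UNIV. x $ Inl i * y $ Inl i + x $ Inr i * y $ Inr i)"
  by (simp add: inner_vec_def sum_UNIV_Plus sum.distrib)

lemma Jmat_components [simp]:
  "Jmat $ Inl i $ Inl j = 0" "Jmat $ Inr i $ Inr j = 0"
  "Jmat $ Inl i $ Inr j = (if i = j then 1 else 0)"
  "Jmat $ Inr i $ Inl j = (if i = j then -1 else 0)"
  by (simp_all add: Jmat_def)

lemma Jmat_mult_vec_components [simp]:
  "(Jmat *v y) $ Inl i = y $ Inr i" "(Jmat *v y) $ Inr i = - y $ Inl i"
  by (simp_all add: matrix_vector_mult_def sum_UNIV_Plus if_distrib[of "\<lambda>a. a * _"] cong: if_cong)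

lemma matrix_vector_mult_uminus [simp]: "A *v (- x) = - (A *v (x::real^'m::finite))"
  using matrix_vector_mult_scaleR[of A "-1" x] by simp

lemma Jmat_mult_Jmat [simp]: "Jmat *v (Jmat *v v) = - (v::('n::finite) svec)"
  by (simp add: vec_eq_iff_Plus)

lemma transpose_Jmat_mult_Jmat: "transpose Jmat ** Jmat = (mat 1 :: ('n::finite) smat)"
  by (simp add: vec_eq_iff_Plus matrix_matrix_mult_def transpose_def sum_UNIV_Plus mat_def
      if_distrib[of "\<lambda>a. a * _"] cong: if_cong)

lemma transpose_Jmat_mult_vec: "transpose Jmat *v y = - (Jmat *v (y::('n::finite) svec))"
proof -
  have "transpose Jmat *v y = (transpose Jmat ** Jmat) *v (Jmat *v (- y))"
    by (simp only: matrix_vector_mul_assoc[symmetric] Jmat_mult_Jmat minus_minus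
        matrix_vector_mult_uminus)
  then show ?thesis by (simp add: transpose_Jmat_mult_Jmat)
qed

lemma inner_Jmat_Jmat [simp]: "(Jmat *v v) \<bullet> (Jmat *v w) = v \<bullet> (w::('n::finite) svec)"
  by (simp add: inner_svec_expand add.commute)

lemma inner_Jmat_left: "(Jmat *v v) \<bullet> w = - (v \<bullet> (Jmat *v (w::('n::finite) svec)))"
  by (simp add: inner_svec_expand sum_negf[symmetric] algebra_simps)

definition symp_form :: "('n::finite) svec \<Rightarrow> 'n svec \<Rightarrow> real" where
  "symp_form x y = x \<bullet> (Jmat *v y)"

lemma symp_form_expand:
  "symp_form x y = (\<Sum>i\<in>UNIV. x $ Inl i * y $ Inr i - x $ Inr i * y $ Inl i)"
  by (simp add: symp_form_def inner_svec_expand)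

lemma symp_form_swap: "symp_form x y = - symp_form y x"
  by (metis symp_form_def inner_Jmat_left inner_commute)

lemma symp_form_self [simp]: "symp_form x x = 0"
  using symp_form_swap[of x x] by simp

lemma symp_form_zero [simp]: "symp_form 0 z = 0" "symp_form z 0 = 0"
  by (simp_all add: symp_form_def)

lemma symp_form_add:
  "symp_form (x + y) z = symp_form x z + symp_form y z"
  "symp_form z (x + y) = symp_form z x + symp_form z y"
  by (simp_all add: symp_form_def inner_add_left inner_add_right matrix_vector_right_distrib)

lemma symp_form_diff:
  "symp_form (x - y) z = symp_form x z - symp_form y z"
  "symp_form z (x - y) = symp_form z x - symp_form z y"
  by (simp_all add: symp_form_def inner_diff_left inner_diff_right matrix_vector_mult_diff_distrib)

lemma symp_form_scaleR:
  "symp_form (c *\<^sub>R x) z = c * symp_form x z" "symp_form z (c *\<^sub>R x) = c * symp_form z x"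
  by (simp_all add: symp_form_def matrix_vector_mult_scaleR)

lemma symp_form_sum:
  "finite I \<Longrightarrow> symp_form (\<Sum>i\<in>I. f i) z = (\<Sum>i\<in>I. symp_form (f i) z)"
  "finite I \<Longrightarrow> symp_form z (\<Sum>i\<in>I. f i) = (\<Sum>i\<in>I. symp_form z (f i))"
  by (induct I rule: finite_induct) (auto simp: symp_form_add)

lemma inner_transpose_right: "x \<bullet> (M *v y) = (transpose M *v x) \<bullet> (y::real^'n::finite)"
  by (metis dot_lmul_matrix vector_transpose_matrix inner_commute)

lemma quadratic_form_congruence:
  "(N *v z) \<bullet> (B *v (N *v z)) = z \<bullet> ((transpose N ** B ** N) *v (z::real^'m::finite))"
  by (metis dot_lmul_matrix vector_transpose_matrix matrix_vector_mul_assoc)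

lemma symplectic_symp_form: "symplectic M \<Longrightarrow> symp_form (M *v x) (M *v y) = symp_form x y"
  unfolding symplectic_def symp_form_def
  by (metis dot_lmul_matrix vector_transpose_matrix matrix_vector_mul_assoc)

lemma symplectic_right_inverse:
  assumes "symplectic N"
  obtains N' where "N ** N' = mat 1" "\<And>x y. symp_form (N' *v x) (N' *v y) = symp_form x y"
proof
  define N' where "N' = transpose Jmat ** transpose N ** Jmat"
  have "N' ** N = transpose Jmat ** (transpose N ** Jmat ** N)"
    unfolding N'_def by (simp add: matrix_mul_assoc)
  then have "N' ** N = mat 1"
    using assms transpose_Jmat_mult_Jmat by (simp add: symplectic_def)
  then show NN': "N ** N' = mat 1" by (simp add: matrix_left_right_inverse)
  show "symp_form (N' *v x) (N' *v y) = symp_form x y" for x y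
    using symplectic_symp_form[OF assms, of "N' *v x" "N' *v y"]
    by (simp add: matrix_vector_mul_assoc NN')
qed

lemma congruence_component:
  "(transpose M ** X ** M) $ p $ q = column p M \<bullet> (X *v column q M)"
proof -
  have "(transpose M ** X ** M) $ p $ q = (\<Sum>s\<in>UNIV. \<Sum>r\<in>UNIV. M$r$p * X$r$s * M$s$q)"
    by (simp add: matrix_matrix_mult_def transpose_def sum_distrib_right)
  also have "\<dots> = (\<Sum>r\<in>UNIV. \<Sum>s\<in>UNIV. M$r$p * X$r$s * M$s$q)"
    by (rule sum.swap)
  finally show ?thesis
    by (simp add: column_def matrix_vector_mult_def inner_vec_def sum_distrib_left mult.assoc)
qed

definition symp_orthonormal :: "'n set \<Rightarrow> ('n \<Rightarrow> ('n::finite) svec) \<Rightarrow> ('n \<Rightarrow> 'n svec) \<Rightarrow> bool" where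
  "symp_orthonormal S u v \<longleftrightarrow> (\<forall>i\<in>S. \<forall>j\<in>S.
     symp_form (u i) (v j) = (if i = j then 1 else 0) \<and> symp_form (u i) (u j) = 0 \<and> symp_form (v i) (v j) = 0)"

lemma symp_orthonormal_image:
  "symplectic M \<Longrightarrow> symp_orthonormal S u v \<Longrightarrow>
     symp_orthonormal S (\<lambda>i. M *v u i) (\<lambda>i. M *v v i)"
  by (simp add: symp_orthonormal_def symplectic_symp_form)

lemma symp_orthonormal_columns:
  assumes "symplectic N"
  shows "symp_orthonormal S (\<lambda>i. column (Inl i) N) (\<lambda>i. column (Inr i) N)"
  using arg_cong[OF assms[unfolded symplectic_def], of "\<lambda>X. X $ _ $ _"]
  by (simp add: symp_orthonormal_def symp_form_def congruence_component)

lemma quadratic_nonpos_imp_linear_coeff_zero: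
  fixes a b :: real
  assumes "\<And>t. a * t + b * t\<^sup>2 \<le> 0"
  shows "a = 0"
proof (rule ccontr)
  assume a: "a \<noteq> 0"
  define c where "c = \<bar>b\<bar> + 1"
  have pos: "c > 0" "c + b > 0" by (auto simp: c_def abs_if)
  have "a * (a / c) + b * (a / c)\<^sup>2 = (a\<^sup>2 / c\<^sup>2) * (c + b)"
    using pos by (simp add: field_simps power2_eq_square)
  also have "\<dots> > 0"
    using a pos by (intro mult_pos_pos divide_pos_pos) auto
  finally show False using assms[of "a / c"] by simp
qed

lemma symmetric_inner_commute:
  "transpose A = A \<Longrightarrow> x \<bullet> (A *v y) = y \<bullet> (A *v (x::real^'n::finite))"
  by (metis inner_transpose_right inner_commute)

lemma quadratic_form_add_scaleR:
  assumes "transpose A = A"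
  shows "(x + t *\<^sub>R y) \<bullet> (A *v (x + t *\<^sub>R y)) =
         x \<bullet> (A *v x) + 2 * t * (y \<bullet> (A *v x)) + t\<^sup>2 * (y \<bullet> (A *v (y::real^'n::finite)))"
  using symmetric_inner_commute[OF assms, of x y]
  by (simp add: matrix_vector_right_distrib matrix_vector_mult_scaleR inner_add_left inner_add_right
      algebra_simps power2_eq_square)

lemma psd_on_subspace_zero_imp_orthogonal:
  fixes K :: "real^'n^'n::finite"
  assumes "transpose K = K" "subspace V" "\<forall>x\<in>V. 0 \<le> x \<bullet> (K *v x)"
    and "x \<in> V" "x \<bullet> (K *v x) = 0" "h \<in> V"
  shows "h \<bullet> (K *v x) = 0"
proof -
  have "(- 2 * (h \<bullet> (K *v x))) * t + (- (h \<bullet> (K *v h))) * t\<^sup>2 \<le> 0" for t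
  proof -
    have "x + t *\<^sub>R h \<in> V" using assms by (intro subspace_add subspace_scale) auto
    then have "0 \<le> (x + t *\<^sub>R h) \<bullet> (K *v (x + t *\<^sub>R h))" using assms(3) by blast
    then show ?thesis unfolding quadratic_form_add_scaleR[OF assms(1)] assms(5) by (simp add: algebra_simps)
  qed
  from quadratic_nonpos_imp_linear_coeff_zero[OF this] show ?thesis by simp
qed

lemma sym_psd_quadratic_form_zero:
  assumes "sym_psd A" "x \<bullet> (A *v x) = 0"
  shows "A *v x = 0"
  using psd_on_subspace_zero_imp_orthogonal[of A UNIV x "A *v x"] assms
  by (simp add: sym_psd_def)

lemma sym_psd_quadratic_form_pos:
  "sym_psd A \<Longrightarrow> A *v x \<noteq> 0 \<Longrightarrow> 0 < x \<bullet> (A *v x)"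
  using sym_psd_quadratic_form_zero by (fastforce simp: sym_psd_def order_le_less)

lemma quadratic_quotient_max_attained:
  fixes P Q :: "real^'m^'m::finite"
  assumes V: "subspace V" and z: "z \<in> V" "z \<noteq> 0"
    and Q: "\<forall>x\<in>V. x \<noteq> 0 \<longrightarrow> 0 < x \<bullet> (Q *v x)"
  obtains x0 \<mu> where "x0 \<in> V" "x0 \<noteq> 0" "x0 \<bullet> (P *v x0) = \<mu> * (x0 \<bullet> (Q *v x0))"
    "\<And>x. x \<in> V \<Longrightarrow> x \<bullet> (P *v x) \<le> \<mu> * (x \<bullet> (Q *v x))"
proof -
  define R where "R x = (x \<bullet> (P *v x)) / (x \<bullet> (Q *v x))" for x
  define S where "S = V \<inter> sphere 0 1"
  have "compact S"
    unfolding S_def by (intro closed_Int_compact closed_subspace V compact_sphere)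
  moreover have "(1 / norm z) *\<^sub>R z \<in> S"
    using z V by (auto simp: S_def subspace_scale)
  moreover have "continuous_on S R"
    unfolding R_def using Q
    by (intro continuous_intros linear_continuous_on matrix_vector_mul_bounded_linear)
      (auto simp: S_def)
  ultimately obtain x0 where x0: "x0 \<in> S" "\<And>y. y \<in> S \<Longrightarrow> R y \<le> R x0"
    using continuous_attains_sup[of S R] by blast
  then have x0V: "x0 \<in> V" "x0 \<noteq> 0" by (auto simp: S_def)
  show thesis
  proof (rule that[OF x0V])
    have "0 < x0 \<bullet> (Q *v x0)" using Q x0V by blast
    then show "x0 \<bullet> (P *v x0) = R x0 * (x0 \<bullet> (Q *v x0))" by (simp add: R_def)
    show "x \<bullet> (P *v x) \<le> R x0 * (x \<bullet> (Q *v x))" if x: "x \<in> V" for x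
    proof (cases "x = 0")
      case False
      let ?y = "(1 / norm x) *\<^sub>R x"
      have "?y \<in> S" using x False V by (auto simp: S_def subspace_scale)
      moreover have "R ?y = R x"
        using False by (simp add: R_def matrix_vector_mult_scaleR power2_eq_square)
      ultimately have "R x \<le> R x0" using x0(2) by metis
      then show ?thesis using Q x False by (simp add: R_def divide_le_eq)
    qed simp
  qed
qed

lemma quadratic_quotient_max_stationary:
  fixes P Q :: "real^'m^'m::finite"
  assumes P: "transpose P = P" and Q: "transpose Q = Q" and V: "subspace V"
    and z: "z \<in> V" "z \<noteq> 0" and Qpos: "\<forall>x\<in>V. x \<noteq> 0 \<longrightarrow> 0 < x \<bullet> (Q *v x)"
  obtains x0 \<mu> where "x0 \<in> V" "x0 \<noteq> 0" "x0 \<bullet> (P *v x0) = \<mu> * (x0 \<bullet> (Q *v x0))"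
    "\<And>h. h \<in> V \<Longrightarrow> h \<bullet> (\<mu> *\<^sub>R (Q *v x0) - P *v x0) = 0"
proof -
  obtain x0 \<mu> where x0: "x0 \<in> V" "x0 \<noteq> 0" and eq: "x0 \<bullet> (P *v x0) = \<mu> * (x0 \<bullet> (Q *v x0))"
    and le: "\<And>x. x \<in> V \<Longrightarrow> x \<bullet> (P *v x) \<le> \<mu> * (x \<bullet> (Q *v x))"
    using quadratic_quotient_max_attained[OF V z Qpos] by blast
  define K where "K = \<mu> *\<^sub>R Q - P"
  have Kv: "K *v x = \<mu> *\<^sub>R (Q *v x) - P *v x" for x
    by (simp add: K_def matrix_vector_mult_diff_rdistrib flip: scaleR_matrix_vector_assoc)
  have K: "transpose K = K"
    using P Q by (simp add: K_def transpose_def vec_eq_iff)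
  have "h \<bullet> (K *v x0) = 0" if "h \<in> V" for h
  proof (rule psd_on_subspace_zero_imp_orthogonal[OF K V _ x0(1) _ that])
    show "\<forall>x\<in>V. 0 \<le> x \<bullet> (K *v x)" using le by (simp add: Kv inner_diff_right)
    show "x0 \<bullet> (K *v x0) = 0" using eq by (simp add: Kv inner_diff_right)
  qed
  then show thesis using that[OF x0 eq] by (simp add: Kv)
qed

section \<open>Williamson's normal form\<close>

definition symp_compl :: "'n set \<Rightarrow> ('n \<Rightarrow> ('n::finite) svec) \<Rightarrow> ('n \<Rightarrow> 'n svec) \<Rightarrow> 'n svec set" where
  "symp_compl I u v = {z. \<forall>i\<in>I. symp_form z (u i) = 0 \<and> symp_form z (v i) = 0}"

lemma subspace_symp_compl: "subspace (symp_compl I u v)"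
  unfolding subspace_def symp_compl_def by (auto simp: symp_form_add symp_form_scaleR)

lemma orthogonal_nonzero_exists:
  fixes G :: "'a::euclidean_space set"
  assumes "finite G" "card G < DIM('a)"
  obtains z where "z \<noteq> 0" "\<forall>g\<in>G. g \<bullet> z = 0"
proof -
  have "dim {y \<in> UNIV. \<forall>x\<in>span G. orthogonal x y} + dim (span G) = dim (UNIV :: 'a set)"
    by (rule dim_subspace_orthogonal_to_vectors) auto
  moreover have "dim (span G) \<le> card G"
    using assms by (simp add: dim_le_card')
  ultimately have "0 < dim {y. \<forall>x\<in>span G. orthogonal x y}"
    using assms(2) by simp
  then have "\<not> {y. \<forall>x\<in>span G. orthogonal x y} \<subseteq> {0}"
    using dim_eq_0[of "{y. \<forall>x\<in>span G. orthogonal x y}"] by linarith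
  then obtain z where "z \<noteq> 0" "\<forall>x\<in>span G. orthogonal x z" by auto
  then show thesis using that by (auto simp: orthogonal_def intro: span_base)
qed

lemma card_image_Un_le: "card (f ` A \<union> g ` A) \<le> 2 * card (A::'a::finite set)"
proof -
  have "card (f ` A \<union> g ` A) \<le> card (f ` A) + card (g ` A)" by (rule card_Un_le)
  also have "\<dots> \<le> card A + card A" by (intro add_mono card_image_le) auto
  finally show ?thesis by simp
qed

lemma symp_compl_nontrivial:
  fixes u v :: "'n \<Rightarrow> ('n::finite) svec"
  assumes "I \<noteq> UNIV"
  obtains z where "z \<in> symp_compl I u v" "z \<noteq> 0"
proof -
  define G where "G = (\<lambda>w. Jmat *v w) ` (u ` I \<union> v ` I)"
  have "card G \<le> card (u ` I \<union> v ` I)"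
    unfolding G_def by (rule card_image_le) simp
  also have "\<dots> \<le> 2 * card I"
    by (rule card_image_Un_le)
  also have "card I < CARD('n)"
    using assms by (intro psubset_card_mono) auto
  finally have "card G < DIM('n svec)" by (simp add: card_UNIV_sum)
  moreover have "finite G" by (simp add: G_def)
  ultimately obtain z where "z \<noteq> 0" "\<forall>g\<in>G. g \<bullet> z = 0"
    using orthogonal_nonzero_exists by blast
  moreover have "{c. \<forall>g\<in>G. g \<bullet> c = 0} = symp_compl I u v"
    by (auto simp: G_def symp_compl_def symp_form_def inner_commute[of "Jmat *v _"])
  ultimately show ?thesis using that[of z] by blast
qed

lemma symp_orthonormal_insert:
  assumes "symp_orthonormal I u v" "x \<in> symp_compl I u v" "y \<in> symp_compl I u v"
    and "symp_form x y = 1"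
  shows "symp_orthonormal (insert i I) (u(i := x)) (v(i := y))"
proof -
  have "symp_form (u j) x = 0" "symp_form (v j) x = 0" "symp_form (u j) y = 0" "symp_form (v j) y = 0"
    if "j \<in> I" for j
    using assms(2,3) that symp_form_swap[of "u j"] symp_form_swap[of "v j"]
    by (auto simp: symp_compl_def)
  moreover have "symp_form y x = -1" using assms(4) symp_form_swap[of y x] by simp
  ultimately show ?thesis
    using assms(1-4) unfolding symp_orthonormal_def symp_compl_def by auto
qed

lemma symp_projection_in_compl:
  assumes "symp_orthonormal I u v"
  shows "z - (\<Sum>i\<in>I. symp_form (u i) z *\<^sub>R v i - symp_form (v i) z *\<^sub>R u i) \<in> symp_compl I u v"
proof -
  let ?p = "\<Sum>i\<in>I. symp_form (u i) z *\<^sub>R v i - symp_form (v i) z *\<^sub>R u i"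
  have vu: "symp_form (v i) (u j) = - (if i = j then 1 else 0)" if "i \<in> I" "j \<in> I" for i j
    using assms that symp_form_swap[of "v i" "u j"] by (auto simp: symp_orthonormal_def)
  have "symp_form ?p (u j) = symp_form z (u j)" "symp_form ?p (v j) = symp_form z (v j)"
    if "j \<in> I" for j
  proof -
    have "I \<inter> {i. i = j} = {j}" using that by auto
    then show "symp_form ?p (u j) = symp_form z (u j)" "symp_form ?p (v j) = symp_form z (v j)"
      using assms that vu symp_form_swap[of z "u j"] symp_form_swap[of z "v j"]
      by (simp_all add: symp_form_sum symp_form_diff symp_form_scaleR symp_orthonormal_def sum_negf
          flip: of_bool_def)
  qed
  then show ?thesis by (simp add: symp_compl_def symp_form_diff)
qed

text \<open>\<open>e i\<close> and \<open>f i\<close> become the columns \<open>i\<close> and \<open>n + i\<close> of a matrix \<open>M\<close> with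
  \<open>M\<^sup>T A M = D \<oplus> D\<close>, \<open>D = diag d\<close>.\<close>
definition williamson_pairs ::
    "('n::finite) smat \<Rightarrow> 'n set \<Rightarrow> ('n \<Rightarrow> 'n svec) \<Rightarrow> ('n \<Rightarrow> 'n svec) \<Rightarrow> ('n \<Rightarrow> real) \<Rightarrow> bool" where
  "williamson_pairs A I e f d \<longleftrightarrow> symp_orthonormal I e f \<and>
     (\<forall>i\<in>I. 0 \<le> d i \<and> A *v e i = d i *\<^sub>R (Jmat *v f i) \<and> A *v f i = - d i *\<^sub>R (Jmat *v e i))"

lemma williamson_pairs_insert:
  assumes "williamson_pairs A I e f d" "x \<in> symp_compl I e f" "y \<in> symp_compl I e f"
    and "symp_form x y = 1" "0 \<le> c" "A *v x = c *\<^sub>R (Jmat *v y)" "A *v y = - c *\<^sub>R (Jmat *v x)"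
  shows "williamson_pairs A (insert i I) (e(i := x)) (f(i := y)) (d(i := c))"
  using assms symp_orthonormal_insert[OF _ assms(2-4)] by (simp add: williamson_pairs_def)

lemma williamson_pairs_symp_form:
  assumes "williamson_pairs A I e f d" "transpose A = A" "i \<in> I"
  shows "d i * symp_form z (f i) = symp_form (Jmat *v (A *v z)) (e i)"
    and "d i * symp_form z (e i) = - symp_form (Jmat *v (A *v z)) (f i)"
proof -
  have "(A *v z) \<bullet> w = z \<bullet> (A *v w)" for w
    using inner_transpose_right[of z A w] assms(2) by simp
  then show "d i * symp_form z (f i) = symp_form (Jmat *v (A *v z)) (e i)"
    and "d i * symp_form z (e i) = - symp_form (Jmat *v (A *v z)) (f i)"
    using assms by (auto simp: williamson_pairs_def symp_form_def)
qed

lemma williamson_pairs_compl_invariant: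
  assumes "williamson_pairs A I e f d" "transpose A = A" "z \<in> symp_compl I e f"
  shows "Jmat *v (A *v z) \<in> symp_compl I e f"
  using assms williamson_pairs_symp_form[OF assms(1,2), of _ z, symmetric]
  by (simp add: symp_compl_def)

lemma williamson_pair_in_kernel:
  assumes w: "williamson_pairs A I e f d" and A: "sym_psd A"
    and K: "symplectic_subspace (kernel A)"
    and x: "x \<in> symp_compl I e f" "x \<noteq> 0" "A *v x = 0"
  obtains y where "y \<in> symp_compl I e f" "symp_form x y = 1" "A *v y = 0"
proof -
  have sym: "transpose A = A" using A by (simp add: sym_psd_def)
  have ker: "subspace (kernel A)" using K by (simp add: symplectic_subspace_def)
  obtain v where v: "A *v v = 0" "symp_form x v \<noteq> 0"
    using K x unfolding symplectic_subspace_def kernel_def symp_form_def by auto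
  define y where "y = v - (\<Sum>i\<in>I. symp_form (e i) v *\<^sub>R f i - symp_form (f i) v *\<^sub>R e i)"
  have y: "y \<in> symp_compl I e f"
    unfolding y_def using w by (intro symp_projection_in_compl) (simp add: williamson_pairs_def)
  have "symp_form (e i) v *\<^sub>R f i - symp_form (f i) v *\<^sub>R e i \<in> kernel A" if "i \<in> I" for i
  proof (cases "d i = 0")
    case True
    then show ?thesis
      using w that by (auto simp: williamson_pairs_def kernel_def
          matrix_vector_mult_diff_distrib matrix_vector_mult_scaleR)
  next
    case False
    have "d i * symp_form v (f i) = 0" "d i * symp_form v (e i) = 0"
      using williamson_pairs_symp_form[OF w sym that, of v] v(1) by simp_all
    then have "symp_form (f i) v = 0" "symp_form (e i) v = 0"
      using False symp_form_swap[of v] by simp_all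
    then show ?thesis using ker by (simp add: subspace_0)
  qed
  then have "(\<Sum>i\<in>I. symp_form (e i) v *\<^sub>R f i - symp_form (f i) v *\<^sub>R e i) \<in> kernel A"
    by (intro subspace_sum[OF ker]) blast
  then have "y \<in> kernel A"
    unfolding y_def using ker v(1) by (intro subspace_diff) (auto simp: kernel_def)
  moreover have "symp_form x y = symp_form x v"
    using x(1) by (simp add: y_def symp_form_diff symp_form_sum symp_form_scaleR symp_compl_def)
  ultimately show thesis
    using that[of "(1 / symp_form x y) *\<^sub>R y"] y v(2)
    by (simp add: symp_form_scaleR kernel_def matrix_vector_mult_scaleR subspace_scale
        subspace_symp_compl)
qed

lemma symplectic_pair_from_eigenvector:
  fixes A :: "('n::finite) smat"
  assumes LL: "Jmat *v (A *v (Jmat *v (A *v x))) = - \<mu> *\<^sub>R x"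
    and \<mu>: "0 < \<mu>" and q: "0 < x \<bullet> (A *v x)"
  obtains s t c where "symp_form (s *\<^sub>R x) (t *\<^sub>R (Jmat *v (A *v x))) = 1" "0 < c"
    "A *v (s *\<^sub>R x) = c *\<^sub>R (Jmat *v (t *\<^sub>R (Jmat *v (A *v x))))"
    "A *v (t *\<^sub>R (Jmat *v (A *v x))) = - c *\<^sub>R (Jmat *v (s *\<^sub>R x))"
proof -
  define c where "c = sqrt \<mu>"
  define s where "s = sqrt (c / (x \<bullet> (A *v x)))"
  have c: "0 < c" "c * c = \<mu>" using \<mu> by (auto simp: c_def)
  have s: "s * s = c / (x \<bullet> (A *v x))" using c q by (simp add: s_def)
  have ALx: "A *v (Jmat *v (A *v x)) = \<mu> *\<^sub>R (Jmat *v x)"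
    using arg_cong[OF LL, of "(*v) Jmat"] by (simp add: matrix_vector_mult_scaleR)
  show thesis
  proof (rule that[of s "- s / c" c])
    have "symp_form (s *\<^sub>R x) ((- s / c) *\<^sub>R (Jmat *v (A *v x))) = s * s / c * (x \<bullet> (A *v x))"
      by (simp add: symp_form_def matrix_vector_mult_scaleR)
    then show "symp_form (s *\<^sub>R x) ((- s / c) *\<^sub>R (Jmat *v (A *v x))) = 1"
      using s c q by simp
    show "A *v (s *\<^sub>R x) = c *\<^sub>R (Jmat *v ((- s / c) *\<^sub>R (Jmat *v (A *v x))))"
      using c by (simp add: matrix_vector_mult_scaleR)
    show "A *v ((- s / c) *\<^sub>R (Jmat *v (A *v x))) = - c *\<^sub>R (Jmat *v (s *\<^sub>R x))"
      using c by (simp add: matrix_vector_mult_scaleR ALx flip: c(2))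
  qed (use c in simp)
qed

lemma Jmat_congruence_mult_vec:
  assumes "transpose A = A"
  shows "(transpose (Jmat ** A) ** A ** (Jmat ** A)) *v y
    = - (A *v (Jmat *v (A *v (Jmat *v (A *v (y::('n::finite) svec))))))"
  using assms
  by (simp add: matrix_vector_mul_assoc[symmetric] matrix_transpose_mul transpose_Jmat_mult_vec
      del: transpose_matrix_vector)

text \<open>First-order condition at a maximiser of \<open>q(J A x) / q(x)\<close>, \<open>q(x) = x\<^sup>T A x\<close>.\<close>
lemma Jmat_mult_sq_eigenvector_exists:
  fixes A :: "('n::finite) smat"
  assumes A: "sym_psd A" and V: "subspace V" and inv: "\<And>x. x \<in> V \<Longrightarrow> Jmat *v (A *v x) \<in> V"
    and z: "z \<in> V" "z \<noteq> 0" and pos: "\<forall>x\<in>V. x \<noteq> 0 \<longrightarrow> A *v x \<noteq> 0"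
  obtains x \<mu> where "x \<in> V" "0 < x \<bullet> (A *v x)" "0 < \<mu>"
    "Jmat *v (A *v (Jmat *v (A *v x))) = - \<mu> *\<^sub>R x"
proof -
  have sym: "transpose A = A" using A by (simp add: sym_psd_def)
  define P where "P = transpose (Jmat ** A) ** A ** (Jmat ** A)"
  have qpos: "0 < x \<bullet> (A *v x)" if "x \<in> V" "x \<noteq> 0" for x
    using pos that sym_psd_quadratic_form_pos[OF A] by blast
  have "transpose P = P"
    by (simp add: P_def matrix_transpose_mul sym matrix_mul_assoc)
  then obtain x0 \<mu> where x0: "x0 \<in> V" "x0 \<noteq> 0" and eq: "x0 \<bullet> (P *v x0) = \<mu> * (x0 \<bullet> (A *v x0))"
    and stat: "\<And>h. h \<in> V \<Longrightarrow> h \<bullet> (\<mu> *\<^sub>R (A *v x0) - P *v x0) = 0"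
    using quadratic_quotient_max_stationary[OF _ sym V z] qpos by blast
  define w where "w = \<mu> *\<^sub>R x0 + Jmat *v (A *v (Jmat *v (A *v x0)))"
  have wV: "w \<in> V"
    unfolding w_def using x0(1) inv V by (intro subspace_add subspace_scale) auto
  have "\<mu> *\<^sub>R (A *v x0) - P *v x0 = A *v w"
    by (simp add: P_def Jmat_congruence_mult_vec[OF sym] w_def matrix_vector_right_distrib
        matrix_vector_mult_scaleR)
  then have "w \<bullet> (A *v w) = 0" using stat[OF wV] by simp
  then have "w = 0"
    using sym_psd_quadratic_form_zero[OF A] pos wV by blast
  then have LL: "Jmat *v (A *v (Jmat *v (A *v x0))) = - \<mu> *\<^sub>R x0"
    by (simp add: w_def add_eq_0_iff2 add.commute)
  have "Jmat *v (A *v x0) \<noteq> 0"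
  proof
    assume "Jmat *v (A *v x0) = 0"
    then have "Jmat *v (Jmat *v (A *v x0)) = 0" by simp
    then show False using pos x0 by simp
  qed
  then have "0 < x0 \<bullet> (P *v x0)"
    using qpos[OF inv[OF x0(1)]] quadratic_form_congruence[of "Jmat ** A" x0 A]
    by (simp add: P_def matrix_vector_mul_assoc[symmetric] del: transpose_matrix_vector)
  then have "0 < \<mu>"
    using eq qpos[OF x0] by (simp add: zero_less_mult_iff)
  then show thesis using that x0(1) qpos[OF x0] LL by blast
qed

lemma williamson_pair_in_positive_compl:
  fixes A :: "('n::finite) smat"
  assumes w: "williamson_pairs A I e f d" and A: "sym_psd A"
    and z: "z \<in> symp_compl I e f" "z \<noteq> 0"
    and pos: "\<forall>x\<in>symp_compl I e f. x \<noteq> 0 \<longrightarrow> A *v x \<noteq> 0"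
  obtains x y c where "x \<in> symp_compl I e f" "y \<in> symp_compl I e f" "symp_form x y = 1" "0 \<le> c"
    "A *v x = c *\<^sub>R (Jmat *v y)" "A *v y = - c *\<^sub>R (Jmat *v x)"
proof -
  have sym: "transpose A = A" using A by (simp add: sym_psd_def)
  note inv = williamson_pairs_compl_invariant[OF w sym]
  obtain x \<mu> where x: "x \<in> symp_compl I e f" "0 < x \<bullet> (A *v x)" "0 < \<mu>"
    "Jmat *v (A *v (Jmat *v (A *v x))) = - \<mu> *\<^sub>R x"
    using Jmat_mult_sq_eigenvector_exists[OF A subspace_symp_compl inv z pos] by blast
  then obtain s t c where st: "symp_form (s *\<^sub>R x) (t *\<^sub>R (Jmat *v (A *v x))) = 1" "0 < c"
    "A *v (s *\<^sub>R x) = c *\<^sub>R (Jmat *v (t *\<^sub>R (Jmat *v (A *v x))))"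
    "A *v (t *\<^sub>R (Jmat *v (A *v x))) = - c *\<^sub>R (Jmat *v (s *\<^sub>R x))"
    using symplectic_pair_from_eigenvector[OF x(4,3,2)] by blast
  show thesis
    by (rule that[OF _ _ st(1) _ st(3,4)])
      (use x inv st(2) in \<open>auto intro: subspace_scale subspace_symp_compl\<close>)
qed

lemma williamson_pairs_exist:
  fixes A :: "('n::finite) smat"
  assumes A: "sym_psd A" and K: "symplectic_subspace (kernel A)"
  shows "\<exists>e f d. williamson_pairs A I e f d"
proof -
  have "finite I" by simp
  then show ?thesis
  proof (induction I rule: finite_induct)
    case empty
    then show ?case by (simp add: williamson_pairs_def symp_orthonormal_def)
  next
    case (insert i I)
    then obtain e f d where w: "williamson_pairs A I e f d" by blast
    obtain z where z: "z \<in> symp_compl I e f" "z \<noteq> 0"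
      using symp_compl_nontrivial[of I e f] insert(2) by blast
    show ?case
    proof (cases "\<exists>x\<in>symp_compl I e f. x \<noteq> 0 \<and> A *v x = 0")
      case True
      then obtain x where x: "x \<in> symp_compl I e f" "x \<noteq> 0" "A *v x = 0" by blast
      obtain y where "y \<in> symp_compl I e f" "symp_form x y = 1" "A *v y = 0"
        using williamson_pair_in_kernel[OF w A K x] .
      then have "williamson_pairs A (insert i I) (e(i := x)) (f(i := y)) (d(i := 0))"
        using x by (intro williamson_pairs_insert[OF w]) auto
      then show ?thesis by blast
    next
      case False
      obtain x y c where "x \<in> symp_compl I e f" "y \<in> symp_compl I e f" "symp_form x y = 1" "0 \<le> c"
        "A *v x = c *\<^sub>R (Jmat *v y)" "A *v y = - c *\<^sub>R (Jmat *v x)"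
        using williamson_pair_in_positive_compl[OF w A z] False by blast
      then have "williamson_pairs A (insert i I) (e(i := x)) (f(i := y)) (d(i := c))"
        by (intro williamson_pairs_insert[OF w])
      then show ?thesis by blast
    qed
  qed
qed

theorem williamson_normal_form:
  fixes A :: "('n::finite) smat"
  assumes "sym_psd A" "symplectic_subspace (kernel A)"
  obtains M d where "symplectic M" "\<And>i. 0 \<le> d i" "transpose M ** A ** M = diag_dsum d"
proof -
  obtain e f d where w: "williamson_pairs A UNIV e f d"
    using williamson_pairs_exist[OF assms] by blast
  define M :: "'n smat" where "M = (\<chi> r q. case q of Inl i \<Rightarrow> e i $ r | Inr i \<Rightarrow> f i $ r)"
  have col: "column (Inl i) M = e i" "column (Inr i) M = f i" for i
    by (simp_all add: M_def column_def vec_eq_iff)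
  have om: "symp_form (e i) (f j) = (if i = j then 1 else 0)" "symp_form (f i) (e j) = (if i = j then -1 else 0)"
    "symp_form (e i) (e j) = 0" "symp_form (f i) (f j) = 0" for i j
    using w symp_form_swap[of "f i" "e j"] by (auto simp: williamson_pairs_def symp_orthonormal_def)
  have eig: "0 \<le> d i" "A *v e i = d i *\<^sub>R (Jmat *v f i)" "A *v f i = - d i *\<^sub>R (Jmat *v e i)" for i
    using w by (auto simp: williamson_pairs_def)
  have "transpose M ** Jmat ** M = Jmat" "transpose M ** A ** M = diag_dsum d"
    by (simp_all add: vec_eq_iff_Plus congruence_component col eig diag_dsum_def
        flip: symp_form_def add: om)
  then show thesis using that[of M d] eig(1) unfolding symplectic_def by blast
qed

section \<open>Sums of smallest entries\<close>

lemma sorted_image_mset_enumeration: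
  fixes d :: "'a::finite \<Rightarrow> 'b::linorder"
  assumes "sorted ds" "mset ds = image_mset d (mset_set UNIV)"
  obtains ys where "distinct ys" "set ys = UNIV" "ds = map d ys"
proof -
  obtain xs :: "'a list" where xs: "set xs = UNIV" "distinct xs"
    using finite_distinct_list[of "UNIV :: 'a set"] by auto
  define ys where "ys = sort_key d xs"
  have ys: "distinct ys" "set ys = UNIV" "sorted (map d ys)"
    using xs by (auto simp: ys_def)
  have "mset (map d ys) = image_mset d (mset_set UNIV)"
    using ys by (simp flip: mset_set_set[OF ys(1)])
  then have "ds = map d ys"
    using assms ys(3) by (metis properties_for_sort sorted_sort_id)
  then show thesis using that ys(1,2) by blast
qed

lemma sorted_image_mset_exists:
  fixes d :: "'a::finite \<Rightarrow> 'b::linorder"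
  shows "\<exists>ds. sorted ds \<and> mset ds = image_mset d (mset_set UNIV)"
proof -
  obtain xs :: "'a list" where xs: "set xs = UNIV" "distinct xs"
    using finite_distinct_list[of "UNIV :: 'a set"] by auto
  show ?thesis
    by (rule exI[of _ "sort (map d xs)"]) (simp flip: xs(1) add: mset_set_set[OF xs(2)])
qed

lemma sum_take_sorted_image_mset:
  fixes d :: "'a::finite \<Rightarrow> real"
  assumes "sorted ds" "mset ds = image_mset d (mset_set UNIV)" "k \<le> CARD('a)"
  obtains S where "card S = k" "sum_list (take k ds) = (\<Sum>p\<in>S. d p)"
proof -
  obtain ys where ys: "distinct ys" "set ys = UNIV" "ds = map d ys"
    using sorted_image_mset_enumeration[OF assms(1,2)] .
  have "length ys = CARD('a)" using ys distinct_card by fastforce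
  then have "card (set (take k ys)) = k" using ys(1) assms(3) by (simp add: distinct_card)
  moreover have "sum_list (take k ds) = (\<Sum>p\<in>set (take k ys). d p)"
    using ys by (simp add: take_map sum_list_distinct_conv_sum_set)
  ultimately show thesis using that by blast
qed

text \<open>Abel summation: peel off the smallest term \<open>f 0\<close> and recurse on the differences
  \<open>f (j + 1) - f 0\<close>.\<close>
lemma sum_lessThan_le_weighted_sum:
  fixes f g :: "nat \<Rightarrow> real"
  assumes "\<forall>j<n. 0 \<le> g j" "\<forall>i j. i \<le> j \<longrightarrow> j < n \<longrightarrow> f i \<le> f j" "\<forall>j<n. 0 \<le> f j"
    and "\<forall>t\<le>n. real k - real t \<le> (\<Sum>j\<in>{t..<n}. g j)"
  shows "(\<Sum>j<k. f j) \<le> (\<Sum>j<n. f j * g j)"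
  using assms
proof (induction n arbitrary: f g k)
  case 0
  then have "k = 0" by auto
  then show ?case by simp
next
  case (Suc n)
  show ?case
  proof (cases k)
    case 0
    have "0 \<le> (\<Sum>j<Suc n. f j * g j)"
      by (rule sum_nonneg) (use Suc.prems(1,3) in auto)
    then show ?thesis using 0 by simp
  next
    case (Suc k')
    define f' where "f' j = f (Suc j) - f 0" for j
    define g' where "g' j = g (Suc j)" for j
    have IH: "(\<Sum>j<k'. f' j) \<le> (\<Sum>j<n. f' j * g' j)"
    proof (rule Suc.IH)
      show "\<forall>j<n. 0 \<le> g' j" using Suc.prems(1) by (auto simp: g'_def)
      show "\<forall>i j. i \<le> j \<longrightarrow> j < n \<longrightarrow> f' i \<le> f' j" using Suc.prems(2) by (auto simp: f'_def)
      show "\<forall>j<n. 0 \<le> f' j" using Suc.prems(2) by (auto simp: f'_def)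
      show "\<forall>t\<le>n. real k' - real t \<le> (\<Sum>j\<in>{t..<n}. g' j)"
      proof (intro allI impI)
        fix t assume "t \<le> n"
        then have "real k - real (Suc t) \<le> (\<Sum>j\<in>{Suc t..<Suc n}. g j)"
          using Suc.prems(4) by auto
        then show "real k' - real t \<le> (\<Sum>j\<in>{t..<n}. g' j)"
          using \<open>k = Suc k'\<close> by (simp add: g'_def sum.shift_bounds_Suc_ivl[symmetric])
      qed
    qed
    have "(\<Sum>j<k. f j) = real k * f 0 + (\<Sum>j<k'. f' j)"
      unfolding \<open>k = Suc k'\<close> f'_def sum.lessThan_Suc_shift by (simp add: sum_subtractf algebra_simps)
    moreover have "(\<Sum>j<Suc n. f j * g j) = f 0 * (\<Sum>j<Suc n. g j) + (\<Sum>j<n. f' j * g' j)"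
      unfolding f'_def g'_def sum.lessThan_Suc_shift
      by (simp add: sum_distrib_left algebra_simps sum.distrib sum_subtractf)
    moreover have "real k * f 0 \<le> f 0 * (\<Sum>j<Suc n. g j)"
    proof -
      have "real k \<le> (\<Sum>j<Suc n. g j)"
        using Suc.prems(4)[rule_format, of 0] by (simp add: atLeast0LessThan)
      moreover have "0 \<le> f 0" using Suc.prems(3) by simp
      ultimately show ?thesis by (metis mult.commute mult_left_mono)
    qed
    ultimately show ?thesis using IH by linarith
  qed
qed

lemma sum_take_sorted_le_weighted_sum:
  fixes d w :: "'a::finite \<Rightarrow> real"
  assumes ds: "sorted ds" "mset ds = image_mset d (mset_set UNIV)"
    and d: "\<forall>p. 0 \<le> d p" and w: "\<forall>p. 0 \<le> w p"
    and tail: "\<forall>R. real k - real (card R) \<le> (\<Sum>p\<in>- R. w p)"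
  shows "sum_list (take k ds) \<le> (\<Sum>p\<in>UNIV. d p * w p)"
proof -
  obtain ys where ys: "distinct ys" "set ys = UNIV" "ds = map d ys"
    using sorted_image_mset_enumeration[OF ds] .
  define n where "n = length ys"
  have bij: "bij_betw ((!) ys) {..<n} UNIV"
    using ys by (intro bij_betw_nth) (auto simp: n_def)
  have "card (UNIV :: 'a set) = n" using ys distinct_card by (fastforce simp: n_def)
  then have "k \<le> n" using tail[rule_format, of UNIV] by simp
  then have lhs: "sum_list (take k ds) = (\<Sum>j<k. d (ys ! j))"
    by (simp add: sum_list_sum_nth ys(3) n_def atLeast0LessThan)
  have rhs: "(\<Sum>p\<in>UNIV. d p * w p) = (\<Sum>j<n. d (ys ! j) * w (ys ! j))"
    using sum.reindex_bij_betw[OF bij, of "\<lambda>p. d p * w p"] by simp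
  have "real k - real t \<le> (\<Sum>j = t..<n. w (ys ! j))" if t: "t \<le> n" for t
  proof -
    have inj: "inj_on ((!) ys) {..<n}" using bij by (simp add: bij_betw_def)
    have "(!) ys ` {..<t} \<inter> (!) ys ` {t..<n} = (!) ys ` ({..<t} \<inter> {t..<n})"
      using t by (intro inj_on_image_Int[OF inj, symmetric]) auto
    then have "(!) ys ` {..<t} \<inter> (!) ys ` {t..<n} = {}" by auto
    moreover have "UNIV = (!) ys ` {..<t} \<union> (!) ys ` {t..<n}"
      using bij t by (auto simp: bij_betw_def image_Un[symmetric] ivl_disj_un_one(2)[symmetric])
    ultimately have "- ((!) ys ` {..<t}) = (!) ys ` {t..<n}" by blast
    moreover have "card ((!) ys ` {..<t}) = t"
      using t by (subst card_image) (auto intro: inj_on_subset[OF inj])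
    moreover have "inj_on ((!) ys) {t..<n}" by (rule inj_on_subset[OF inj]) auto
    ultimately show ?thesis
      using tail[rule_format, of "(!) ys ` {..<t}"] by (simp add: sum.reindex)
  qed
  then have "(\<Sum>j<k. d (ys ! j)) \<le> (\<Sum>j<n. d (ys ! j) * w (ys ! j))"
    using d w ds(1) ys(3) by (intro sum_lessThan_le_weighted_sum) (auto simp: n_def sorted_iff_nth_mono)
  then show ?thesis using lhs rhs by simp
qed

section \<open>A variational bound for sums of symplectic eigenvalues\<close>

lemma bessel_inequality:
  fixes b :: "'i \<Rightarrow> 'a::real_inner"
  assumes "finite I" "\<forall>i\<in>I. \<forall>j\<in>I. b i \<bullet> b j = (if i = j then 1 else 0)"
  shows "(\<Sum>i\<in>I. (r \<bullet> b i)\<^sup>2) \<le> r \<bullet> r"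
proof -
  define s where "s = (\<Sum>i\<in>I. (r \<bullet> b i) *\<^sub>R b i)"
  have rs: "r \<bullet> s = (\<Sum>i\<in>I. (r \<bullet> b i)\<^sup>2)"
    by (simp add: s_def inner_sum_right power2_eq_square)
  have "b j \<bullet> s = r \<bullet> b j" if "j \<in> I" for j
  proof -
    have "I \<inter> {i. j = i} = {j}" using that by auto
    then show ?thesis
      using assms that by (simp add: s_def inner_sum_right flip: of_bool_def)
  qed
  then have ss: "s \<bullet> s = (\<Sum>i\<in>I. (r \<bullet> b i)\<^sup>2)"
    by (simp add: s_def inner_sum_left power2_eq_square)
  have "0 \<le> (r - s) \<bullet> (r - s)" by simp
  also have "\<dots> = r \<bullet> r - 2 * (r \<bullet> s) + s \<bullet> s"
    by (simp add: inner_diff_left inner_diff_right inner_commute[of s r])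
  finally show ?thesis using rs ss by simp
qed

lemma orthonormal_Jmat_family_exists:
  fixes G :: "('n::finite) svec set"
  assumes "finite G" "card G + 2 * m \<le> 2 * CARD('n)"
  obtains c where "\<forall>a<m. \<forall>g\<in>G. g \<bullet> c a = 0"
    "\<forall>a<m. \<forall>b<m. c a \<bullet> c b = (if a = b then 1 else 0) \<and> c a \<bullet> (Jmat *v c b) = 0"
  using assms(2)
proof (induction m arbitrary: thesis)
  case 0
  then show ?case by simp
next
  case (Suc m)
  have "card G + 2 * m \<le> 2 * CARD('n)" using Suc.prems(2) by simp
  then obtain c where cG: "\<forall>a<m. \<forall>g\<in>G. g \<bullet> c a = 0"
    and c: "\<forall>a<m. \<forall>b<m. c a \<bullet> c b = (if a = b then 1 else 0) \<and> c a \<bullet> (Jmat *v c b) = 0"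
    using Suc.IH by blast
  define G' where "G' = G \<union> c ` {..<m} \<union> (\<lambda>a. Jmat *v c a) ` {..<m}"
  have "card G' \<le> card G + card (c ` {..<m}) + card ((\<lambda>a. Jmat *v c a) ` {..<m})"
    unfolding G'_def by (intro order.trans[OF card_Un_le] add_mono card_Un_le) auto
  also have "\<dots> \<le> card G + m + m"
    by (intro add_mono card_image_le[THEN order.trans]) auto
  finally have "card G' < DIM('n svec)"
    using Suc.prems(2) by (simp add: card_UNIV_sum)
  then obtain z where z: "z \<noteq> 0" "\<forall>g\<in>G'. g \<bullet> z = 0"
    using orthogonal_nonzero_exists[of G'] assms(1) by (auto simp: G'_def)
  define z' where "z' = (1 / norm z) *\<^sub>R z"
  have "z' \<bullet> z' = 1"
    using z(1) by (simp add: z'_def power2_eq_square flip: power2_norm_eq_inner)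
  moreover have "\<forall>g\<in>G. g \<bullet> z' = 0" and cz: "\<forall>a<m. c a \<bullet> z' = 0 \<and> (Jmat *v c a) \<bullet> z' = 0"
    using z(2) by (auto simp: G'_def z'_def)
  moreover have "\<forall>a<m. z' \<bullet> c a = 0 \<and> z' \<bullet> (Jmat *v c a) = 0 \<and> c a \<bullet> (Jmat *v z') = 0"
    using cz inner_Jmat_left[of "c _" z'] by (auto simp: inner_commute[of z'])
  moreover have "z' \<bullet> (Jmat *v z') = 0"
    using symp_form_self[of z', unfolded symp_form_def] .
  ultimately show ?case
    using Suc.prems(1)[of "c(m := z')"] cG c by (auto simp: less_Suc_eq)
qed

definition frame_matrix :: "'n set \<Rightarrow> ('n \<Rightarrow> ('n::finite) svec) \<Rightarrow> ('n \<Rightarrow> 'n svec) \<Rightarrow> 'n smat" where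
  "frame_matrix S u v = (\<chi> r q. case q of
      Inl i \<Rightarrow> if i \<in> S then u i $ r else 0
    | Inr i \<Rightarrow> if i \<in> S then v i $ r else 0)"

lemma sum_UNIV_if_mem: "(\<Sum>i\<in>(UNIV::'a::finite set). if i \<in> S then g i else 0) = sum g S"
  using sum.inter_restrict[of UNIV g S] by simp

lemma frame_matrix_mult_vec:
  "frame_matrix S u v *v c = (\<Sum>i\<in>S. c $ Inl i *\<^sub>R u i + c $ Inr i *\<^sub>R v i)"
proof -
  have "(frame_matrix S u v *v c) $ r
      = (\<Sum>i\<in>UNIV. if i \<in> S then c $ Inl i * u i $ r + c $ Inr i * v i $ r else 0)" for r
    by (simp add: matrix_vector_mult_def frame_matrix_def sum_UNIV_Plus flip: sum.distrib)
      (intro sum.cong, auto)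
  then show ?thesis by (simp add: vec_eq_iff sum_UNIV_if_mem)
qed

lemma norm_frame_matrix_row:
  "(norm (frame_matrix S u v $ r))\<^sup>2 = (\<Sum>i\<in>S. (u i $ r)\<^sup>2 + (v i $ r)\<^sup>2)"
proof -
  have "(norm (frame_matrix S u v $ r))\<^sup>2 = (\<Sum>i\<in>UNIV. if i \<in> S then (u i $ r)\<^sup>2 + (v i $ r)\<^sup>2 else 0)"
    unfolding power2_norm_eq_inner inner_svec_expand
    by (intro sum.cong) (auto simp: frame_matrix_def power2_eq_square)
  then show ?thesis by (simp add: sum_UNIV_if_mem)
qed

lemma symp_form_frame_matrix:
  assumes "symp_orthonormal S u v" and c: "\<forall>i. i \<notin> S \<longrightarrow> c $ Inl i = 0 \<and> c $ Inr i = 0"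
  shows "symp_form (frame_matrix S u v *v c) (frame_matrix S u v *v c') = symp_form c c'"
proof -
  let ?F = "frame_matrix S u v"
  have "symp_form (u i) (?F *v c') = c' $ Inr i" "symp_form (v i) (?F *v c') = - c' $ Inl i"
    if "i \<in> S" for i
  proof -
    have "S \<inter> {j. i = j} = {i}" using that by auto
    then show "symp_form (u i) (?F *v c') = c' $ Inr i" "symp_form (v i) (?F *v c') = - c' $ Inl i"
      using assms(1) that symp_form_swap[of "v i" "u _"]
      by (simp_all add: frame_matrix_mult_vec symp_form_sum symp_form_add symp_form_scaleR
          symp_orthonormal_def sum_negf flip: of_bool_def)
  qed
  then have "symp_form (?F *v c) (?F *v c') = (\<Sum>i\<in>S. c $ Inl i * c' $ Inr i - c $ Inr i * c' $ Inl i)"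
    by (simp add: frame_matrix_mult_vec[of S u v c] symp_form_sum(1) symp_form_add(1) symp_form_scaleR(1))
  also have "\<dots> = symp_form c c'"
    unfolding symp_form_expand using c by (intro sum.mono_neutral_left) auto
  finally show ?thesis .
qed

definition outside_norm2 :: "'n set \<Rightarrow> ('n::finite) svec \<Rightarrow> real" where
  "outside_norm2 R z = (\<Sum>p\<in>-R. (z $ Inl p)\<^sup>2 + (z $ Inr p)\<^sup>2)"

lemma symp_form_le_outside_norm2:
  assumes "\<forall>p\<in>R. z $ Inl p = 0 \<and> z $ Inr p = 0"
  shows "2 * symp_form z w \<le> outside_norm2 R z + outside_norm2 R w"
proof -
  have "2 * symp_form z w = (\<Sum>p\<in>-R. 2 * (z $ Inl p * w $ Inr p) - 2 * (z $ Inr p * w $ Inl p))"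
    unfolding symp_form_expand sum_distrib_left right_diff_distrib using assms
    by (intro sum.mono_neutral_right) auto
  also have "\<dots> \<le> (\<Sum>p\<in>-R. (z $ Inl p)\<^sup>2 + (z $ Inr p)\<^sup>2 + ((w $ Inl p)\<^sup>2 + (w $ Inr p)\<^sup>2))"
  proof (rule sum_mono)
    fix p
    have "0 \<le> (z $ Inl p - w $ Inr p)\<^sup>2" "0 \<le> (z $ Inr p + w $ Inl p)\<^sup>2" by simp_all
    then show "2 * (z $ Inl p * w $ Inr p) - 2 * (z $ Inr p * w $ Inl p)
        \<le> (z $ Inl p)\<^sup>2 + (z $ Inr p)\<^sup>2 + ((w $ Inl p)\<^sup>2 + (w $ Inr p)\<^sup>2)"
      by (simp add: power2_eq_square algebra_simps)
  qed
  finally show ?thesis by (simp add: outside_norm2_def sum.distrib)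
qed

lemma frame_matrix_pair_weight_ge:
  assumes "symp_orthonormal S u v" "\<forall>i. i \<notin> S \<longrightarrow> c $ Inl i = 0 \<and> c $ Inr i = 0"
    and "\<forall>p\<in>R. (frame_matrix S u v *v c) $ Inl p = 0 \<and> (frame_matrix S u v *v c) $ Inr p = 0"
  shows "2 * (c \<bullet> c) \<le> outside_norm2 R (frame_matrix S u v *v c)
           + outside_norm2 R (frame_matrix S u v *v - (Jmat *v c))"
proof -
  have "symp_form c (- (Jmat *v c)) = c \<bullet> c" by (simp add: symp_form_def)
  then show ?thesis
    using symp_form_le_outside_norm2[OF assms(3), of "frame_matrix S u v *v - (Jmat *v c)"]
      symp_form_frame_matrix[OF assms(1,2), of "- (Jmat *v c)"]
    by linarith
qed

lemma orthonormal_Jmat_family_supported_exists: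
  fixes F :: "('n::finite) smat" and S R :: "'n set"
  assumes "card R \<le> card S"
  defines "m \<equiv> card S - card R"
  obtains c where "\<forall>a<m. \<forall>i. i \<notin> S \<longrightarrow> c a $ Inl i = 0 \<and> c a $ Inr i = 0"
    "\<forall>a<m. \<forall>p\<in>R. (F *v c a) $ Inl p = 0 \<and> (F *v c a) $ Inr p = 0"
    "\<forall>a<m. \<forall>b<m. c a \<bullet> c b = (if a = b then 1 else 0) \<and> c a \<bullet> (Jmat *v c b) = 0"
proof -
  define G where "G = ((\<lambda>i. axis (Inl i) 1) ` (-S) \<union> (\<lambda>i. axis (Inr i) 1) ` (-S))
      \<union> ((\<lambda>p. F $ Inl p) ` R \<union> (\<lambda>p. F $ Inr p) ` R)"
  have "card G \<le> 2 * card (-S) + 2 * card R"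
    unfolding G_def by (intro order.trans[OF card_Un_le] add_mono card_image_Un_le)
  moreover have "card (-S) + card S = CARD('n)"
    using card_Un_disjoint[of "-S" S] by (simp add: Compl_partition2)
  ultimately have "card G + 2 * m \<le> 2 * CARD('n)"
    using assms(1) by (simp add: m_def)
  then obtain c where cG: "\<forall>a<m. \<forall>g\<in>G. g \<bullet> c a = 0"
    and c: "\<forall>a<m. \<forall>b<m. c a \<bullet> c b = (if a = b then 1 else 0) \<and> c a \<bullet> (Jmat *v c b) = 0"
    using orthonormal_Jmat_family_exists[of G m] by (auto simp: G_def)
  have "\<forall>a<m. \<forall>i. i \<notin> S \<longrightarrow> c a $ Inl i = 0 \<and> c a $ Inr i = 0"
  proof (intro allI impI)
    fix a i assume "a < m" "i \<notin> S"
    then have "axis (Inl i) 1 \<bullet> c a = 0" "axis (Inr i) 1 \<bullet> c a = 0"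
      using cG by (auto simp: G_def)
    then show "c a $ Inl i = 0 \<and> c a $ Inr i = 0" by (simp add: inner_axis')
  qed
  moreover have "\<forall>a<m. \<forall>p\<in>R. (F *v c a) $ Inl p = 0 \<and> (F *v c a) $ Inr p = 0"
    using cG by (auto simp: G_def matrix_vector_mul_component)
  ultimately show thesis using that c by blast
qed

text \<open>Bessel's inequality for the orthonormal system \<open>c\<^sub>a, -J c\<^sub>a\<close>; each pair contributes at
  least \<open>2\<close>.\<close>
lemma frame_matrix_row_weights_ge:
  fixes R :: "'n::finite set"
  assumes uv: "symp_orthonormal S u v"
  shows "2 * (real (card S) - real (card R)) \<le>
    (\<Sum>p\<in>-R. (norm (frame_matrix S u v $ Inl p))\<^sup>2 + (norm (frame_matrix S u v $ Inr p))\<^sup>2)"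
proof (cases "card R \<le> card S")
  case False
  have "0 \<le> (\<Sum>p\<in>-R. (norm (frame_matrix S u v $ Inl p))\<^sup>2 + (norm (frame_matrix S u v $ Inr p))\<^sup>2)"
    by (intro sum_nonneg) auto
  then show ?thesis using False by simp
next
  case True
  define m where "m = card S - card R"
  let ?F = "frame_matrix S u v"
  obtain c where supp: "\<forall>a<m. \<forall>i. i \<notin> S \<longrightarrow> c a $ Inl i = 0 \<and> c a $ Inr i = 0"
    and rows: "\<forall>a<m. \<forall>p\<in>R. (?F *v c a) $ Inl p = 0 \<and> (?F *v c a) $ Inr p = 0"
    and c: "\<forall>a<m. \<forall>b<m. c a \<bullet> c b = (if a = b then 1 else 0) \<and> c a \<bullet> (Jmat *v c b) = 0"
    using orthonormal_Jmat_family_supported_exists[OF True, of ?F] unfolding m_def by blast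
  define b where "b = case_sum c (\<lambda>a. - (Jmat *v c a))"
  let ?I = "{..<m} <+> {..<m}"
  have cc: "c a \<bullet> c a' = (if a = a' then 1 else 0)" and cJc: "c a \<bullet> (Jmat *v c a') = 0"
    and Jcc: "(Jmat *v c a) \<bullet> c a' = 0" if "a < m" "a' < m" for a a'
    using c that inner_commute[of "Jmat *v c a" "c a'"] by auto
  have "b l \<bullet> b l' = (if l = l' then 1 else 0)" if "l \<in> ?I" "l' \<in> ?I" for l l'
    using that by (auto simp: b_def cc cJc Jcc split: if_split_asm)
  then have bessel: "(\<Sum>l\<in>?I. (r \<bullet> b l)\<^sup>2) \<le> (norm r)\<^sup>2" for r
    using bessel_inequality[of ?I b r] by (simp add: power2_norm_eq_inner)
  have "2 \<le> outside_norm2 R (?F *v b (Inl a)) + outside_norm2 R (?F *v b (Inr a))" if "a < m" for a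
    using frame_matrix_pair_weight_ge[OF uv, of "c a" R] supp rows cc[OF that that] that
    by (simp add: b_def)
  then have "(\<Sum>a<m. 2) \<le> (\<Sum>a<m. outside_norm2 R (?F *v b (Inl a)) + outside_norm2 R (?F *v b (Inr a)))"
    by (intro sum_mono) simp
  then have "2 * real m \<le> (\<Sum>a<m. outside_norm2 R (?F *v b (Inl a)) + outside_norm2 R (?F *v b (Inr a)))"
    by simp
  also have "\<dots> = (\<Sum>l\<in>?I. outside_norm2 R (?F *v b l))"
    by (simp add: sum.Plus sum.distrib)
  also have "\<dots> = (\<Sum>p\<in>-R. (\<Sum>l\<in>?I. (?F $ Inl p \<bullet> b l)\<^sup>2) + (\<Sum>l\<in>?I. (?F $ Inr p \<bullet> b l)\<^sup>2))"
    unfolding outside_norm2_def matrix_vector_mul_component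
    by (subst sum.swap) (simp add: sum.distrib)
  also have "\<dots> \<le> (\<Sum>p\<in>-R. (norm (?F $ Inl p))\<^sup>2 + (norm (?F $ Inr p))\<^sup>2)"
    by (intro sum_mono add_mono bessel)
  finally show ?thesis using True by (simp add: m_def of_nat_diff)
qed

definition frame_trace :: "('n::finite) smat \<Rightarrow> 'n set \<Rightarrow> ('n \<Rightarrow> 'n svec) \<Rightarrow> ('n \<Rightarrow> 'n svec) \<Rightarrow> real" where
  "frame_trace A S u v = (\<Sum>i\<in>S. u i \<bullet> (A *v u i) + v i \<bullet> (A *v v i))"

lemma frame_trace_congruence:
  "frame_trace (transpose N ** B ** N) S u v = frame_trace B S (\<lambda>i. N *v u i) (\<lambda>i. N *v v i)"
  by (simp add: frame_trace_def quadratic_form_congruence)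

lemma frame_trace_sum:
  "finite L \<Longrightarrow> frame_trace (\<Sum>l\<in>L. c l *\<^sub>R X l) S u v = (\<Sum>l\<in>L. c l * frame_trace (X l) S u v)"
  by (induction L rule: finite_induct)
    (simp_all add: frame_trace_def matrix_vector_mult_add_rdistrib inner_add_right sum.distrib
      sum_distrib_left distrib_left flip: scaleR_matrix_vector_assoc)

lemma diag_dsum_mult_vec_components [simp]:
  "(diag_dsum d *v z) $ Inl p = d p * z $ Inl p" "(diag_dsum d *v z) $ Inr p = d p * z $ Inr p"
  by (simp_all add: matrix_vector_mult_def diag_dsum_def sum_UNIV_Plus if_distrib[of "\<lambda>a. a * _"]
      cong: if_cong)

lemma frame_trace_diag_dsum:
  "frame_trace (diag_dsum d) S u v =
     (\<Sum>p\<in>UNIV. d p * ((norm (frame_matrix S u v $ Inl p))\<^sup>2 + (norm (frame_matrix S u v $ Inr p))\<^sup>2))"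
proof -
  have diag: "z \<bullet> (diag_dsum d *v z) = (\<Sum>p\<in>UNIV. d p * ((z $ Inl p)\<^sup>2 + (z $ Inr p)\<^sup>2))" for z
    by (simp add: inner_svec_expand power2_eq_square algebra_simps)
  have "frame_trace (diag_dsum d) S u v
      = (\<Sum>i\<in>S. \<Sum>p\<in>UNIV. d p * ((u i $ Inl p)\<^sup>2 + (v i $ Inl p)\<^sup>2 + ((u i $ Inr p)\<^sup>2 + (v i $ Inr p)\<^sup>2)))"
    unfolding frame_trace_def diag by (simp add: sum.distrib[symmetric] algebra_simps)
  also have "\<dots> = (\<Sum>p\<in>UNIV. \<Sum>i\<in>S. d p * ((u i $ Inl p)\<^sup>2 + (v i $ Inl p)\<^sup>2 + ((u i $ Inr p)\<^sup>2 + (v i $ Inr p)\<^sup>2)))"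
    by (rule sum.swap)
  finally show ?thesis
    by (simp add: norm_frame_matrix_row sum_distrib_left sum.distrib distrib_left)
qed

lemma sum_take_le_frame_trace_diag_dsum:
  fixes d :: "'n::finite \<Rightarrow> real"
  assumes uv: "symp_orthonormal S u v" and d: "\<forall>p. 0 \<le> d p"
    and ds: "sorted ds" "mset ds = image_mset d (mset_set UNIV)"
  shows "2 * sum_list (take (card S) ds) \<le> frame_trace (diag_dsum d) S u v"
proof -
  define w where "w p = ((norm (frame_matrix S u v $ Inl p))\<^sup>2 + (norm (frame_matrix S u v $ Inr p))\<^sup>2) / 2" for p
  have "sum_list (take (card S) ds) \<le> (\<Sum>p\<in>UNIV. d p * w p)"
  proof (rule sum_take_sorted_le_weighted_sum[OF ds d])
    show "\<forall>p. 0 \<le> w p" by (simp add: w_def)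
    show "\<forall>R. real (card S) - real (card R) \<le> (\<Sum>p\<in>- R. w p)"
      using frame_matrix_row_weights_ge[OF uv] by (simp add: w_def field_simps flip: sum_divide_distrib)
  qed
  then show ?thesis
    by (simp add: frame_trace_diag_dsum w_def sum_distrib_left flip: sum_divide_distrib)
qed

section \<open>The symplectic spectrum\<close>

definition symp_spectrum :: "('n::finite) smat \<Rightarrow> real list \<Rightarrow> bool" where
  "symp_spectrum A ds \<longleftrightarrow> sorted ds \<and>
      (\<exists>M d. symplectic M \<and> (\<forall>i. 0 \<le> d i) \<and> transpose M ** A ** M = diag_dsum d \<and>
             mset ds = image_mset d (mset_set (UNIV :: 'n set)))"

lemma symp_spectrum_exists:
  fixes A :: "('n::finite) smat"
  assumes "sym_psd A" "symplectic_subspace (kernel A)"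
  shows "\<exists>ds. symp_spectrum A ds"
proof -
  obtain M d where "symplectic M" "\<forall>i. 0 \<le> d i" "transpose M ** A ** M = diag_dsum d"
    using williamson_normal_form[OF assms] by metis
  moreover obtain ds where "sorted ds" "mset ds = image_mset d (mset_set UNIV)"
    using sorted_image_mset_exists[of d] by blast
  ultimately show ?thesis unfolding symp_spectrum_def by blast
qed

lemma symp_spectrum_length: "symp_spectrum (A::('n::finite) smat) ds \<Longrightarrow> length ds = CARD('n)"
  unfolding symp_spectrum_def by (metis size_mset size_image_mset size_mset_set)

lemma symp_spectrum_sum_take_le_frame_trace:
  assumes "symp_spectrum B ds" "symp_orthonormal S u v"
  shows "2 * sum_list (take (card S) ds) \<le> frame_trace B S u v"
proof -
  obtain N d where N: "symplectic N" "\<forall>i. 0 \<le> d i" "transpose N ** B ** N = diag_dsum d"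
    and ds: "sorted ds" "mset ds = image_mset d (mset_set UNIV)"
    using assms(1) unfolding symp_spectrum_def by blast
  obtain N' where N': "N ** N' = mat 1" "\<And>x y. symp_form (N' *v x) (N' *v y) = symp_form x y"
    using symplectic_right_inverse[OF N(1)] by blast
  have "symp_orthonormal S (\<lambda>i. N' *v u i) (\<lambda>i. N' *v v i)"
    using assms(2) N'(2) by (simp add: symp_orthonormal_def)
  then have "2 * sum_list (take (card S) ds) \<le> frame_trace (diag_dsum d) S (\<lambda>i. N' *v u i) (\<lambda>i. N' *v v i)"
    by (rule sum_take_le_frame_trace_diag_dsum[OF _ N(2) ds])
  also have "\<dots> = frame_trace B S u v"
    by (simp add: flip: N(3) add: frame_trace_congruence matrix_vector_mul_assoc N'(1))
  finally show ?thesis .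
qed

lemma symp_spectrum_sum_take_attained:
  fixes A :: "('n::finite) smat"
  assumes "symp_spectrum A ds" "k \<le> CARD('n)"
  obtains S u v where "card S = k" "symp_orthonormal S u v" "frame_trace A S u v = 2 * sum_list (take k ds)"
proof -
  obtain N d where N: "symplectic N" "transpose N ** A ** N = diag_dsum d"
    and ds: "sorted ds" "mset ds = image_mset d (mset_set UNIV)"
    using assms(1) unfolding symp_spectrum_def by blast
  obtain S where S: "card S = k" "sum_list (take k ds) = (\<Sum>p\<in>S. d p)"
    using sum_take_sorted_image_mset[OF ds assms(2)] .
  let ?u = "\<lambda>i. column (Inl i) N" and ?v = "\<lambda>i. column (Inr i) N"
  have "?u i \<bullet> (A *v ?u i) = d i" "?v i \<bullet> (A *v ?v i) = d i" for i
    using arg_cong[OF N(2), of "\<lambda>X. X $ Inl i $ Inl i"] arg_cong[OF N(2), of "\<lambda>X. X $ Inr i $ Inr i"]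
    by (simp_all add: congruence_component diag_dsum_def)
  then have "frame_trace A S ?u ?v = 2 * sum_list (take k ds)"
    by (simp add: frame_trace_def S(2) sum_distrib_left)
  then show thesis using that[OF S(1) symp_orthonormal_columns[OF N(1)]] by blast
qed

lemma sum_take_eq_imp_eq:
  fixes xs ys :: "'a::ab_group_add list"
  assumes "length xs = length ys" "\<forall>k\<le>length xs. sum_list (take k xs) = sum_list (take k ys)"
  shows "xs = ys"
proof (rule nth_equalityI)
  fix j assume j: "j < length xs"
  have "xs ! j = sum_list (take (Suc j) xs) - sum_list (take j xs)"
    using j by (simp add: take_Suc_conv_app_nth)
  also have "\<dots> = sum_list (take (Suc j) ys) - sum_list (take j ys)"
    using assms(2) j by simp
  also have "\<dots> = ys ! j"
    using j assms(1) by (simp add: take_Suc_conv_app_nth)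
  finally show "xs ! j = ys ! j" .
qed fact

lemma symp_spectrum_unique:
  fixes A :: "('n::finite) smat"
  assumes "symp_spectrum A ds" "symp_spectrum A ds'"
  shows "ds = ds'"
proof -
  have "sum_list (take k ds) \<le> sum_list (take k ds')"
    if sp: "symp_spectrum A ds" "symp_spectrum A ds'" and k: "k \<le> length ds" for ds ds' k
  proof -
    have "k \<le> CARD('n)" using k symp_spectrum_length[OF sp(1)] by simp
    then obtain S u v where "card S = k" "symp_orthonormal S u v"
      "frame_trace A S u v = 2 * sum_list (take k ds')"
      by (rule symp_spectrum_sum_take_attained[OF sp(2)])
    then show ?thesis using symp_spectrum_sum_take_le_frame_trace[OF sp(1)] by fastforce
  qed
  then show ?thesis
    using assms symp_spectrum_length[OF assms(1)] symp_spectrum_length[OF assms(2)]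
    by (intro sum_take_eq_imp_eq) (auto intro: order.antisym)
qed

lemma symp_spectrum_symp_eigs:
  assumes "sym_psd A" "symplectic_subspace (kernel A)"
  shows "symp_spectrum A (symp_eigs A)"
proof -
  obtain ds where "symp_spectrum A ds" using symp_spectrum_exists[OF assms] ..
  moreover have "symp_eigs A = (THE ds. symp_spectrum A ds)"
    by (simp add: symp_eigs_def symp_spectrum_def)
  ultimately show ?thesis using symp_spectrum_unique by (metis the_equality)
qed

theorem theorem3p4:
  fixes A B :: "('n::finite) smat"
    and m :: nat and M :: "nat \<Rightarrow> 'n smat" and lam :: "nat \<Rightarrow> real"
  assumes "sym_psd A" and "symplectic_subspace (kernel A)"
    and "sym_psd B" and "symplectic_subspace (kernel B)"
    and "m \<ge> 1"
    and "\<forall>i<m. symplectic (M i)"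
    and "\<forall>i<m. lam i > 0"
    and "(\<Sum>i<m. lam i) = 1"
    and "A = (\<Sum>i<m. lam i *\<^sub>R (transpose (M i) ** B ** M i))"
  shows "weak_supmaj (symp_eigs A) (symp_eigs B)"
proof -
  have spA: "symp_spectrum A (symp_eigs A)" and spB: "symp_spectrum B (symp_eigs B)"
    using assms(1-4) by (simp_all add: symp_spectrum_symp_eigs)
  have "sum_list (take k (symp_eigs B)) \<le> sum_list (take k (symp_eigs A))"
    if "k \<le> length (symp_eigs A)" for k
  proof -
    have "k \<le> CARD('n)" using that symp_spectrum_length[OF spA] by simp
    then obtain S u v where S: "card S = k" "symp_orthonormal S u v"
      and attained: "frame_trace A S u v = 2 * sum_list (take k (symp_eigs A))"
      by (rule symp_spectrum_sum_take_attained[OF spA])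
    have "(\<Sum>l<m. lam l * (2 * sum_list (take k (symp_eigs B))))
        \<le> (\<Sum>l<m. lam l * frame_trace B S (\<lambda>i. M l *v u i) (\<lambda>i. M l *v v i))"
      using symp_spectrum_sum_take_le_frame_trace[OF spB symp_orthonormal_image[OF _ S(2)]]
        assms(6,7) S(1) by (intro sum_mono mult_left_mono) auto
    also have "\<dots> = frame_trace A S u v"
      by (simp add: assms(9) frame_trace_sum frame_trace_congruence)
    finally show ?thesis
      using assms(8) attained by (simp flip: sum_distrib_right)
  qed
  then show ?thesis
    using spA spB symp_spectrum_length[OF spA] symp_spectrum_length[OF spB]
    by (simp add: weak_supmaj_def symp_spectrum_def sorted_sort_id)
qed

end
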